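(* Let $(b,c)$ be a connected canonically compactifiable weighted graph over $X$ and fix $o\in X$. Then $$\widetilde D_o=\{u\in\widetilde D:\ \hat u|_{\partial X}=0\}.$$
   Context: Let $X$ be a countably infinite set. A weighted graph $(b,c)$ over $X$ consists of a symmetric $b:X\times X\to[0,\infty)$ with $b(x,x)=0$ and $\sum_{y}b(x,y)<\infty$ for all $x$, and $c:X\to[0,\infty)$; connected means any two distinct vertices are joined by a finite path of pairwise distinct vertices with consecutive ones satisfying $b>0$. Let $\widetilde Q(f)=\frac12\sum_{x,y}b(x,y)|f(x)-f(y)|^2+\sum_x c(x)|f(x)|^2$, $\widetilde D=\{f:X\to\mathbb C:\widetilde Q(f)<\infty\}$, and for fixed $o\in X$, $\|f\|_o=(\widetilde Q(f)+|f(o)|^2)^{1/2}$ on $\widetilde D$. Let $C_c(X)$ be the finitely supported functions and $\widetilde D_o$ the closure of $C_c(X)$ in $\widetilde D$ with respect to $\|\cdot\|_o$. The graph is canonically compactifiable if $\widetilde D\subseteq\ell^\infty(X)$. In that case let $\mathcal A$ be the sup-norm closure of $\widetilde D$ in $\ell^\infty(X)$, $\mathcal A^+$ the smallest $C^*$-subalgebra of $\ell^\infty(X)$ containing $\mathcal A$ and $1$, $K$ the set of characters (nonzero multiplicative linear functionals) of $\mathcal A^+$ with the weak-$*$ topology (a compact Hausdorff space), and for $g\in\mathcal A^+$ let $\hat g:K\to\mathbb C$, $\hat g(\gamma)=\gamma(g)$. The map $x\mapsto\delta_x$, $\delta_x(f)=f(x)$, embeds $X$ into $K$; identifying $X$ with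 its image, set $\partial X=K\setminus X$. *)

theory Defs
  imports "HOL-Analysis.Analysis"
begin

definition weighted_graph :: "('x \<Rightarrow> 'x \<Rightarrow> real) \<Rightarrow> ('x \<Rightarrow> real) \<Rightarrow> bool" where
  "weighted_graph b c \<longleftrightarrow>
     (\<forall>x y. b x y \<ge> 0) \<and> (\<forall>x y. b x y = b y x) \<and> (\<forall>x. b x x = 0) \<and>
     (\<forall>x. (\<lambda>y. b x y) summable_on UNIV) \<and> (\<forall>x. c x \<ge> 0)"

definition graph_connected :: "('x \<Rightarrow> 'x \<Rightarrow> real) \<Rightarrow> bool" where
  "graph_connected b \<longleftrightarrow>
     (\<forall>x y. x \<noteq> y \<longrightarrow> (\<exists>p. p \<noteq> [] \<and> hd p = x \<and> last p = y \<and> distinct p \<and>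
        (\<forall>i. Suc i < length p \<longrightarrow> b (p ! i) (p ! Suc i) > 0)))"

definition in_Dt :: "('x \<Rightarrow> 'x \<Rightarrow> real) \<Rightarrow> ('x \<Rightarrow> real) \<Rightarrow> ('x \<Rightarrow> complex) \<Rightarrow> bool" where
  "in_Dt b c f \<longleftrightarrow>
     (\<lambda>(x,y). b x y * (cmod (f x - f y))\<^sup>2) summable_on UNIV \<and>
     (\<lambda>x. c x * (cmod (f x))\<^sup>2) summable_on UNIV"

definition Dt :: "('x \<Rightarrow> 'x \<Rightarrow> real) \<Rightarrow> ('x \<Rightarrow> real) \<Rightarrow> ('x \<Rightarrow> complex) set" where
  "Dt b c = {f. in_Dt b c f}"

definition Qt :: "('x \<Rightarrow> 'x \<Rightarrow> real) \<Rightarrow> ('x \<Rightarrow> real) \<Rightarrow> ('x \<Rightarrow> complex) \<Rightarrow> real" where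
  "Qt b c f = (1/2) * (\<Sum>\<^sub>\<infinity>(x,y). b x y * (cmod (f x - f y))\<^sup>2) + (\<Sum>\<^sub>\<infinity>x. c x * (cmod (f x))\<^sup>2)"

definition norm_o :: "('x \<Rightarrow> 'x \<Rightarrow> real) \<Rightarrow> ('x \<Rightarrow> real) \<Rightarrow> 'x \<Rightarrow> ('x \<Rightarrow> complex) \<Rightarrow> real" where
  "norm_o b c v0 f = sqrt (Qt b c f + (cmod (f v0))\<^sup>2)"

definition Cc :: "('x \<Rightarrow> complex) set" where
  "Cc = {f. finite {x. f x \<noteq> 0}}"

(* closure of C_c(X) in Dt w.r.t. the norm \<parallel>.\<parallel>_o *)
definition Dt_o :: "('x \<Rightarrow> 'x \<Rightarrow> real) \<Rightarrow> ('x \<Rightarrow> real) \<Rightarrow> 'x \<Rightarrow> ('x \<Rightarrow> complex) set" where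
  "Dt_o b c v0 = {f \<in> Dt b c. \<forall>e>0. \<exists>g\<in>Cc. norm_o b c v0 (\<lambda>x. f x - g x) < e}"

definition canonically_compactifiable :: "('x \<Rightarrow> 'x \<Rightarrow> real) \<Rightarrow> ('x \<Rightarrow> real) \<Rightarrow> bool" where
  "canonically_compactifiable b c \<longleftrightarrow> (\<forall>f\<in>Dt b c. bounded (range f))"

(* sup-norm closure of Dt inside l^\<infinity>(X) *)
definition Aalg :: "('x \<Rightarrow> 'x \<Rightarrow> real) \<Rightarrow> ('x \<Rightarrow> real) \<Rightarrow> ('x \<Rightarrow> complex) set" where
  "Aalg b c = {f. bounded (range f) \<and> (\<forall>e>0. \<exists>g\<in>Dt b c. \<forall>x. cmod (f x - g x) \<le> e)}"

definition cstar_subalgebra :: "('x \<Rightarrow> complex) set \<Rightarrow> bool" where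
  "cstar_subalgebra S \<longleftrightarrow>
     (\<forall>f\<in>S. bounded (range f)) \<and> (\<lambda>_. 0) \<in> S \<and>
     (\<forall>f\<in>S. \<forall>g\<in>S. (\<lambda>x. f x + g x) \<in> S) \<and>
     (\<forall>a. \<forall>f\<in>S. (\<lambda>x. a * f x) \<in> S) \<and>
     (\<forall>f\<in>S. \<forall>g\<in>S. (\<lambda>x. f x * g x) \<in> S) \<and>
     (\<forall>f\<in>S. (\<lambda>x. cnj (f x)) \<in> S) \<and>
     (\<forall>f. bounded (range f) \<and> (\<forall>e>0. \<exists>g\<in>S. \<forall>x. cmod (f x - g x) \<le> e) \<longrightarrow> f \<in> S)"

definition Aplus :: "('x \<Rightarrow> 'x \<Rightarrow> real) \<Rightarrow> ('x \<Rightarrow> real) \<Rightarrow> ('x \<Rightarrow> complex) set" where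
  "Aplus b c = \<Inter>{S. cstar_subalgebra S \<and> Aalg b c \<subseteq> S \<and> (\<lambda>_. 1) \<in> S}"

definition is_character :: "('x \<Rightarrow> complex) set \<Rightarrow> (('x \<Rightarrow> complex) \<Rightarrow> complex) \<Rightarrow> bool" where
  "is_character S \<gamma> \<longleftrightarrow>
     (\<forall>f\<in>S. \<forall>g\<in>S. \<gamma> (\<lambda>x. f x + g x) = \<gamma> f + \<gamma> g) \<and>
     (\<forall>a. \<forall>f\<in>S. \<gamma> (\<lambda>x. a * f x) = a * \<gamma> f) \<and>
     (\<forall>f\<in>S. \<forall>g\<in>S. \<gamma> (\<lambda>x. f x * g x) = \<gamma> f * \<gamma> g) \<and>
     (\<exists>f\<in>S. \<gamma> f \<noteq> 0)"

definition boundary :: "('x \<Rightarrow> complex) set \<Rightarrow> (('x \<Rightarrow> complex) \<Rightarrow> complex) set" where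
  "boundary S = {\<gamma>. is_character S \<gamma> \<and> \<not> (\<exists>x. \<forall>f\<in>S. \<gamma> f = f x)}"

end

theory Submission
  imports Defs
begin

text \<open>
  Such a character kills every indicator \<open>\<delta>\<^sub>s\<close> of a vertex (if \<open>\<gamma> \<delta>\<^sub>s = 1\<close>, then
  \<open>\<gamma> f = \<gamma> (f \<delta>\<^sub>s) = f s\<close>), hence every finitely supported function, and like every
  character it is contractive for the sup norm (Neumann series).

  For \<open>\<subseteq>\<close>: on a connected canonically compactifiable graph \<open>norm_o\<close> dominates the sup
  norm, since otherwise a rapidly converging series of normalised functions would be an
  unbounded element of \<open>Dt b c\<close>. So every \<open>u \<in> Dt_o b c v0\<close> is a uniform limit of finitely
  supported functions, and boundary characters vanish at \<open>u\<close>.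

  For \<open>\<supseteq>\<close>: if \<open>\<epsilon> \<le> |u|\<close> on an infinite set, the limit along a free ultrafilter on
  that set is a boundary character with \<open>\<epsilon> \<le> |\<gamma> u|\<close>. Hence \<open>u\<close> vanishes at infinity;
  then \<open>u\<close> minus its truncation at a small level \<open>r\<close> is finitely supported, and the
  truncation, being a normal contraction of \<open>u\<close> bounded by \<open>r\<close>, has small \<open>norm_o\<close>.
\<close>

section \<open>C*-subalgebras of bounded functions and their characters\<close>

lemma cstar_subalgebraD:
  assumes "cstar_subalgebra S"
  shows "\<forall>f\<in>S. bounded (range f)" "(\<lambda>_. 0) \<in> S"
    "\<forall>f\<in>S. \<forall>g\<in>S. (\<lambda>x. f x + g x) \<in> S" "\<forall>a. \<forall>f\<in>S. (\<lambda>x. a * f x) \<in> S"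
    "\<forall>f\<in>S. \<forall>g\<in>S. (\<lambda>x. f x * g x) \<in> S" "\<forall>f\<in>S. (\<lambda>x. cnj (f x)) \<in> S"
    "\<forall>f. bounded (range f) \<and> (\<forall>e>0. \<exists>g\<in>S. \<forall>x. cmod (f x - g x) \<le> e) \<longrightarrow> f \<in> S"
  using assms unfolding cstar_subalgebra_def by - (elim conjE, assumption)+

lemma
  assumes S: "cstar_subalgebra S"
  shows cstar_subalgebra_bounded: "f \<in> S \<Longrightarrow> bounded (range f)"
    and cstar_subalgebra_zero: "(\<lambda>_. 0) \<in> S"
    and cstar_subalgebra_add: "f \<in> S \<Longrightarrow> g \<in> S \<Longrightarrow> (\<lambda>x. f x + g x) \<in> S"
    and cstar_subalgebra_scale: "f \<in> S \<Longrightarrow> (\<lambda>x. a * f x) \<in> S"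
    and cstar_subalgebra_mult: "f \<in> S \<Longrightarrow> g \<in> S \<Longrightarrow> (\<lambda>x. f x * g x) \<in> S"
    and cstar_subalgebra_cnj: "f \<in> S \<Longrightarrow> (\<lambda>x. cnj (f x)) \<in> S"
    and cstar_subalgebra_uniform_limit:
      "bounded (range f) \<Longrightarrow> (\<And>e. e > 0 \<Longrightarrow> \<exists>g\<in>S. \<forall>x. cmod (f x - g x) \<le> e) \<Longrightarrow> f \<in> S"
  using cstar_subalgebraD[OF S] by blast+

lemma cstar_subalgebra_diff:
  assumes "cstar_subalgebra S" "f \<in> S" "g \<in> S"
  shows "(\<lambda>x. f x - g x) \<in> S"
  using cstar_subalgebra_add[OF assms(1,2) cstar_subalgebra_scale[OF assms(1,3), of "-1"]] by simp

lemma cstar_subalgebra_sum: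
  assumes "cstar_subalgebra S" "finite I" "\<And>i. i \<in> I \<Longrightarrow> f i \<in> S"
  shows "(\<lambda>x. \<Sum>i\<in>I. f i x) \<in> S"
  using assms(2,3)
  by (induction I rule: finite_induct)
     (simp_all add: cstar_subalgebra_zero[OF assms(1)] cstar_subalgebra_add[OF assms(1)])

lemma cstar_subalgebra_power:
  assumes "cstar_subalgebra S" "(\<lambda>_. 1) \<in> S" "h \<in> S"
  shows "(\<lambda>x. h x ^ n) \<in> S"
  by (induction n) (simp_all add: assms cstar_subalgebra_mult[OF assms(1) assms(3)])

lemma cstar_subalgebra_bounded_functions: "cstar_subalgebra {f. bounded (range f)}"
proof -
  have mult: "bounded (range (\<lambda>x. f x * g x))"
    if "bounded (range f)" "bounded (range g)" for f g :: "'a \<Rightarrow> complex"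
  proof -
    from that obtain A B where "\<And>x. cmod (f x) \<le> A" "\<And>x. cmod (g x) \<le> B"
      unfolding bounded_iff by auto
    then have "cmod (f x * g x) \<le> A * B" for x
      unfolding norm_mult by (intro mult_mono) (auto intro: order_trans[OF norm_ge_zero])
    then show ?thesis unfolding bounded_iff by auto
  qed
  have "bounded (range (\<lambda>x. f x + g x))"
    if "bounded (range f)" "bounded (range g)" for f g :: "'a \<Rightarrow> complex"
    using bounded_plus_comp[OF that] by (simp add: image_image)
  moreover have "bounded (range (\<lambda>x. cnj (f x)))" if "bounded (range f)" for f :: "'a \<Rightarrow> complex"
    using that unfolding bounded_iff by auto
  moreover have "bounded (range (\<lambda>x. a * f x))" if "bounded (range f)" for a and f :: "'a \<Rightarrow> complex"
    using mult[OF _ that, of "\<lambda>_. a"] by simp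
  ultimately show ?thesis
    unfolding cstar_subalgebra_def using mult by simp
qed

lemma cstar_subalgebra_Inter:
  assumes "\<S> \<noteq> {}" and S: "\<And>S. S \<in> \<S> \<Longrightarrow> cstar_subalgebra S"
  shows "cstar_subalgebra (\<Inter>\<S>)"
  unfolding cstar_subalgebra_def
proof (intro conjI ballI allI impI)
  fix f assume "f \<in> \<Inter>\<S>"
  then show "bounded (range f)" using assms cstar_subalgebra_bounded by blast
next
  show "(\<lambda>_. 0) \<in> \<Inter>\<S>" using S cstar_subalgebra_zero by blast
next
  fix f g assume "f \<in> \<Inter>\<S>" "g \<in> \<Inter>\<S>"
  then show "(\<lambda>x. f x + g x) \<in> \<Inter>\<S>" "(\<lambda>x. f x * g x) \<in> \<Inter>\<S>"
    using S cstar_subalgebra_add cstar_subalgebra_mult by blast+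
next
  fix a f assume "f \<in> \<Inter>\<S>"
  then show "(\<lambda>x. a * f x) \<in> \<Inter>\<S>" using S cstar_subalgebra_scale by blast
next
  fix f assume "f \<in> \<Inter>\<S>"
  then show "(\<lambda>x. cnj (f x)) \<in> \<Inter>\<S>" using S cstar_subalgebra_cnj by blast
next
  fix f assume f: "bounded (range f) \<and> (\<forall>e>0. \<exists>g\<in>\<Inter>\<S>. \<forall>x. cmod (f x - g x) \<le> e)"
  show "f \<in> \<Inter>\<S>"
  proof
    fix S assume "S \<in> \<S>"
    then show "f \<in> S"
      using f by (intro cstar_subalgebra_uniform_limit[OF S]) blast+
  qed
qed

lemma cstar_subalgebra_Aplus: "cstar_subalgebra (Aplus b c)"
  unfolding Aplus_def
proof (rule cstar_subalgebra_Inter)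
  have "Aalg b c \<subseteq> {f. bounded (range f)}" unfolding Aalg_def by blast
  then have "{f. bounded (range f)} \<in> {S. cstar_subalgebra S \<and> Aalg b c \<subseteq> S \<and> (\<lambda>_. 1) \<in> S}"
    using cstar_subalgebra_bounded_functions by simp
  then show "{S. cstar_subalgebra S \<and> Aalg b c \<subseteq> S \<and> (\<lambda>_. 1) \<in> S} \<noteq> {}" by blast
qed simp

lemma one_in_Aplus: "(\<lambda>_. 1) \<in> Aplus b c"
  unfolding Aplus_def by simp

lemma Dt_subset_Aplus:
  assumes "canonically_compactifiable b c"
  shows "Dt b c \<subseteq> Aplus b c"
proof -
  have "f \<in> Aalg b c" if "f \<in> Dt b c" for f
    using assms that unfolding canonically_compactifiable_def Aalg_def
    by (auto intro!: bexI[of _ f])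
  moreover have "Aalg b c \<subseteq> Aplus b c" unfolding Aplus_def by auto
  ultimately show ?thesis by auto
qed

lemma
  assumes "is_character S \<gamma>"
  shows character_add: "f \<in> S \<Longrightarrow> g \<in> S \<Longrightarrow> \<gamma> (\<lambda>x. f x + g x) = \<gamma> f + \<gamma> g"
    and character_scale: "f \<in> S \<Longrightarrow> \<gamma> (\<lambda>x. a * f x) = a * \<gamma> f"
    and character_mult: "f \<in> S \<Longrightarrow> g \<in> S \<Longrightarrow> \<gamma> (\<lambda>x. f x * g x) = \<gamma> f * \<gamma> g"
    and character_nonzero: "\<exists>f\<in>S. \<gamma> f \<noteq> 0"
  using assms unfolding is_character_def by blast+

lemma character_diff:
  assumes "is_character S \<gamma>" "cstar_subalgebra S" "f \<in> S" "g \<in> S"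
  shows "\<gamma> (\<lambda>x. f x - g x) = \<gamma> f - \<gamma> g"
proof -
  have "\<gamma> (\<lambda>x. f x + (-1) * g x) = \<gamma> f + \<gamma> (\<lambda>x. (-1) * g x)"
    by (rule character_add[OF assms(1,3) cstar_subalgebra_scale[OF assms(2,4)]])
  also have "\<gamma> (\<lambda>x. (-1) * g x) = (-1) * \<gamma> g"
    by (rule character_scale[OF assms(1,4)])
  finally show ?thesis by simp
qed

lemma character_one:
  assumes "is_character S \<gamma>" "(\<lambda>_. 1) \<in> S"
  shows "\<gamma> (\<lambda>_. 1) = 1"
proof -
  obtain f where "f \<in> S" "\<gamma> f \<noteq> 0" using character_nonzero[OF assms(1)] by blast
  moreover have "\<gamma> (\<lambda>x. f x * 1) = \<gamma> f * \<gamma> (\<lambda>_. 1)"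
    using character_mult[OF assms(1) \<open>f \<in> S\<close> assms(2)] .
  ultimately show ?thesis by simp
qed

lemma norm_neumann_partial_sum_error:
  fixes l z :: "'a::real_normed_field"
  assumes z: "norm z \<le> M" and l: "M < norm l"
  shows "norm (1 / (l - z) - inverse l * (\<Sum>j<N. (inverse l * z) ^ j))
    \<le> (M / norm l) ^ N / (norm l - M)"
proof -
  define q where "q = inverse l * z"
  have M0: "0 \<le> M" using order_trans[OF norm_ge_zero z] .
  then have l0: "l \<noteq> 0" using l by auto
  have gap: "norm l - M \<le> norm (l - z)"
    using z norm_triangle_ineq2[of l z] by linarith
  then have ne: "l - z \<noteq> 0" using l by auto
  have lq: "l - z = l * (1 - q)" using l0 by (simp add: q_def field_simps)
  then have "1 - q \<noteq> 0" using ne by auto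
  then have "inverse l * (\<Sum>j<N. q ^ j) = (1 - q ^ N) / (l - z)"
    unfolding one_diff_power_eq lq using l0 by (simp add: field_simps)
  then have "1 / (l - z) - inverse l * (\<Sum>j<N. q ^ j) = q ^ N / (l - z)"
    using ne by (simp add: field_simps)
  moreover have "norm q = norm z / norm l"
    by (simp add: q_def norm_mult norm_inverse divide_inverse_commute)
  ultimately have "norm (1 / (l - z) - inverse l * (\<Sum>j<N. q ^ j)) = (norm z / norm l) ^ N / norm (l - z)"
    by (simp add: norm_divide norm_power)
  also have "\<dots> \<le> (M / norm l) ^ N / (norm l - M)"
    using z gap l M0 by (intro frac_le power_mono divide_right_mono) auto
  finally show ?thesis unfolding q_def .
qed

lemma cstar_subalgebra_inverse:
  assumes S: "cstar_subalgebra S" "(\<lambda>_. 1) \<in> S" and h: "h \<in> S"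
    and M: "\<And>x. cmod (h x) \<le> M" and l: "M < cmod l"
  shows "(\<lambda>x. 1 / (l - h x)) \<in> S"
proof (rule cstar_subalgebra_uniform_limit[OF S(1)])
  note err = norm_neumann_partial_sum_error[OF M l]
  show "bounded (range (\<lambda>x. 1 / (l - h x)))"
    using err[of _ 0] unfolding bounded_iff by auto
  have q: "(\<lambda>x. inverse l * h x) \<in> S" by (rule cstar_subalgebra_scale[OF S(1) h])
  have partial_sum_in: "(\<lambda>x. inverse l * (\<Sum>j<N. (inverse l * h x) ^ j)) \<in> S" for N
    by (intro cstar_subalgebra_scale[OF S(1)] cstar_subalgebra_sum[OF S(1)] finite_lessThan
        cstar_subalgebra_power[OF S q])
  fix e :: real assume "e > 0"
  moreover have "M / cmod l < 1" using l by (simp add: divide_less_eq)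
  ultimately obtain N where "(M / cmod l) ^ N < e * (cmod l - M)"
    using real_arch_pow_inv[of "e * (cmod l - M)"] l by auto
  then have "(M / cmod l) ^ N / (cmod l - M) \<le> e"
    using l by (simp add: divide_le_eq mult.commute)
  then show "\<exists>g\<in>S. \<forall>x. cmod (1 / (l - h x) - g x) \<le> e"
    using err[of _ N] by (intro bexI[OF _ partial_sum_in[of N]] allI) (meson order_trans)
qed

lemma character_norm_le:
  assumes S: "cstar_subalgebra S" "(\<lambda>_. 1) \<in> S" and \<gamma>: "is_character S \<gamma>"
    and h: "h \<in> S" and M: "\<And>x. cmod (h x) \<le> M"
  shows "cmod (\<gamma> h) \<le> M"
proof (rule ccontr)
  assume "\<not> cmod (\<gamma> h) \<le> M"
  then have k: "(\<lambda>x. 1 / (\<gamma> h - h x)) \<in> S" (is "?k \<in> S")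
    by (intro cstar_subalgebra_inverse[OF S h M]) simp
  have c: "(\<lambda>x. \<gamma> h * 1) \<in> S" using cstar_subalgebra_scale[OF S] .
  have d: "(\<lambda>x. \<gamma> h * 1 - h x) \<in> S" (is "?d \<in> S")
    using cstar_subalgebra_diff[OF S(1) c h] .
  have "\<gamma> ?d = 0"
    using character_diff[OF \<gamma> S(1) c h] character_scale[OF \<gamma> S(2)] character_one[OF \<gamma> S(2)]
    by simp
  then have "\<gamma> (\<lambda>x. ?d x * ?k x) = 0" using character_mult[OF \<gamma> d k] by simp
  moreover have "(\<lambda>x. ?d x * ?k x) = (\<lambda>_. 1)"
  proof
    fix x
    have "h x \<noteq> \<gamma> h" using M[of x] \<open>\<not> cmod (\<gamma> h) \<le> M\<close> by auto
    then show "?d x * ?k x = 1" by simp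
  qed
  ultimately show False using character_one[OF \<gamma> S(2)] by simp
qed

lemma character_zero:
  assumes "is_character S \<gamma>" "cstar_subalgebra S"
  shows "\<gamma> (\<lambda>_. 0) = 0"
  using character_scale[OF assms(1) cstar_subalgebra_zero[OF assms(2)], of 0] by simp

lemma
  assumes "\<gamma> \<in> boundary S"
  shows boundary_is_character: "is_character S \<gamma>"
    and boundary_not_evaluation: "\<exists>f\<in>S. \<gamma> f \<noteq> f x"
  using assms unfolding boundary_def by auto

lemma boundary_indicator_singleton:
  assumes \<gamma>: "\<gamma> \<in> boundary S" and s: "indicator {s} \<in> S"
  shows "\<gamma> (indicator {s}) = 0"
proof (rule ccontr)
  assume nz: "\<gamma> (indicator {s}) \<noteq> 0"
  have char: "is_character S \<gamma>" using boundary_is_character[OF \<gamma>] .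
  have "(\<lambda>x. indicator {s} x * indicator {s} x :: complex) = indicator {s}"
    by (auto simp: indicator_def)
  then have "\<gamma> (indicator {s}) = \<gamma> (indicator {s}) * \<gamma> (indicator {s})"
    using character_mult[OF char s s] by simp
  then have one: "\<gamma> (indicator {s}) = 1" using nz by simp
  have "\<gamma> f = f s" if f: "f \<in> S" for f
  proof -
    have eq: "(\<lambda>x. f x * indicator {s} x) = (\<lambda>x. f s * indicator {s} x)"
      by (auto simp: indicator_def)
    have "\<gamma> f * \<gamma> (indicator {s}) = \<gamma> (\<lambda>x. f x * indicator {s} x)"
      by (rule character_mult[OF char f s, symmetric])
    also have "\<dots> = \<gamma> (\<lambda>x. f s * indicator {s} x)" using eq by simp
    also have "\<dots> = f s * \<gamma> (indicator {s})" by (rule character_scale[OF char s])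
    finally show ?thesis using one by simp
  qed
  then show False using boundary_not_evaluation[OF \<gamma>] by blast
qed

lemma boundary_vanishes_on_Cc:
  assumes S: "cstar_subalgebra S" "Cc \<subseteq> S" and \<gamma>: "\<gamma> \<in> boundary S" and g: "g \<in> Cc"
  shows "\<gamma> g = 0"
proof -
  have char: "is_character S \<gamma>" using boundary_is_character[OF \<gamma>] .
  have indicator_in: "indicator T \<in> S" if "finite T" for T
    using that S(2) unfolding Cc_def by (auto simp: indicator_def)
  have indicator_zero: "\<gamma> (indicator T) = 0" if "finite T" for T
    using that
  proof (induction T rule: finite_induct)
    case empty
    then show ?case using character_zero[OF char S(1)] by simp
  next
    case (insert s T)
    then have "indicator (insert s T) = (\<lambda>x. indicator {s} x + indicator T x :: complex)"
      by (auto simp: indicator_def)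
    then show ?case
      using character_add[OF char indicator_in indicator_in] insert
        boundary_indicator_singleton[OF \<gamma> indicator_in]
      by simp
  qed
  define T where "T = {x. g x \<noteq> 0}"
  have T: "finite T" using g unfolding Cc_def T_def by simp
  have "(\<lambda>x. g x * indicator T x) = g" by (auto simp: T_def indicator_def)
  then show ?thesis
    using character_mult[OF char subsetD[OF S(2) g] indicator_in[OF T]] indicator_zero[OF T] by simp
qed

lemma character_vanishes_on_uniform_limit:
  assumes S: "cstar_subalgebra S" "(\<lambda>_. 1) \<in> S" and \<gamma>: "is_character S \<gamma>" and u: "u \<in> S"
    and approx: "\<And>e. e > 0 \<Longrightarrow> \<exists>g\<in>S. \<gamma> g = 0 \<and> (\<forall>x. cmod (u x - g x) \<le> e)"
  shows "\<gamma> u = 0"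
proof -
  have "cmod (\<gamma> u) \<le> 0 + e" if e: "e > 0" for e
  proof -
    obtain g where g: "g \<in> S" "\<gamma> g = 0" "\<And>x. cmod (u x - g x) \<le> e" using approx[OF e] by blast
    have "\<gamma> u = \<gamma> (\<lambda>x. u x - g x)" using character_diff[OF \<gamma> S(1) u g(1)] g(2) by simp
    also have "cmod \<dots> \<le> e"
      by (rule character_norm_le[OF S \<gamma> cstar_subalgebra_diff[OF S(1) u g(1)] g(3)])
    finally show ?thesis by simp
  qed
  then have "cmod (\<gamma> u) \<le> 0" by (rule field_le_epsilon)
  then show ?thesis by simp
qed

section \<open>Characters from ultrafilters\<close>

lemma Inf_chain_filters_not_bot:
  fixes C :: "'a filter set"
  assumes "C \<noteq> {}" "\<And>F. F \<in> C \<Longrightarrow> F \<noteq> bot"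
    and chain: "\<And>F F'. F \<in> C \<Longrightarrow> F' \<in> C \<Longrightarrow> F \<le> F' \<or> F' \<le> F"
  shows "Inf C \<noteq> bot"
proof -
  have "eventually P (Inf C) \<longleftrightarrow> (\<exists>F\<in>C. eventually P F)" for P
  proof (rule eventually_Inf_base[OF assms(1)])
    fix F F' assume FF': "F \<in> C" "F' \<in> C"
    show "\<exists>x\<in>C. x \<le> inf F F'"
    proof (cases "F \<le> F'")
      case True
      then show ?thesis using FF' by (intro bexI[of _ F]) auto
    next
      case False
      then show ?thesis using FF' chain[OF FF'] by (intro bexI[of _ F']) auto
    qed
  qed
  then show ?thesis using assms(2) by (auto simp flip: eventually_False)
qed

lemma exists_ultrafilter_le:
  fixes G :: "'a filter"
  assumes "G \<noteq> bot"
  shows "\<exists>F\<le>G. F \<noteq> bot \<and> (\<forall>P. eventually P F \<or> eventually (\<lambda>x. \<not> P x) F)"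
proof -
  let ?A = "{F. F \<noteq> bot \<and> F \<le> G}"
  have "\<exists>M\<in>?A. \<forall>F\<in>?A. F \<le> M \<longrightarrow> F = M"
  proof (rule predicate_Zorn)
    show "partial_order_on ?A (relation_of (\<lambda>F F'. F' \<le> F) ?A)"
      by (rule partial_order_on_relation_ofI) auto
  next
    fix C assume C: "C \<in> Chains (relation_of (\<lambda>F F'. F' \<le> F) ?A)"
    have CA: "C \<subseteq> ?A" using Chains_relation_of[OF C] .
    show "\<exists>U\<in>?A. \<forall>F\<in>C. U \<le> F"
    proof (cases "C = {}")
      case False
      then obtain F0 where "F0 \<in> C" by blast
      then have "Inf C \<le> G" using CA Inf_lower[of F0 C] by auto
      moreover have "Inf C \<noteq> bot"
        using False CA C unfolding Chains_def relation_of_def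
        by (intro Inf_chain_filters_not_bot) auto
      ultimately show ?thesis by (auto intro: Inf_lower)
    qed (use assms in auto)
  qed
  then obtain M where M: "M \<noteq> bot" "M \<le> G" and max: "\<And>F. F \<noteq> bot \<Longrightarrow> F \<le> M \<Longrightarrow> F = M"
    by (auto dest: order_trans)
  have "eventually P M \<or> eventually (\<lambda>x. \<not> P x) M" for P
  proof (rule disjCI)
    assume "\<not> eventually (\<lambda>x. \<not> P x) M"
    then have "inf M (principal {x. P x}) \<noteq> bot"
      by (auto simp flip: eventually_False simp: eventually_inf_principal)
    then have "inf M (principal {x. P x}) = M" by (rule max) simp
    moreover have "eventually P (inf M (principal {x. P x}))"
      by (simp add: eventually_inf_principal)
    ultimately show "eventually P M" by simp
  qed
  then show ?thesis using M by blast
qed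

lemma ultrafilter_tendsto_Lim:
  fixes f :: "'a \<Rightarrow> 'b::heine_borel"
  assumes F: "F \<noteq> bot" "\<And>P. eventually P F \<or> eventually (\<lambda>x. \<not> P x) F"
    and f: "bounded (range f)"
  shows "(f \<longlongrightarrow> Lim F f) F"
proof -
  have "filtermap f F \<noteq> bot" using F(1) by (simp add: filtermap_bot_iff)
  moreover have "eventually (\<lambda>y. y \<in> closure (range f)) (filtermap f F)"
    by (auto simp: eventually_filtermap intro: always_eventually closure_subset[THEN subsetD])
  ultimately obtain l where l: "inf (nhds l) (filtermap f F) \<noteq> bot"
    using f compact_closure[of "range f"] unfolding compact_filter by blast
  have "(f \<longlongrightarrow> l) F"
    unfolding tendsto_def
  proof (intro allI impI)
    fix U assume U: "open U" "l \<in> U"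
    show "eventually (\<lambda>x. f x \<in> U) F"
    proof (rule ccontr)
      assume "\<not> eventually (\<lambda>x. f x \<in> U) F"
      then have "eventually (\<lambda>y. y \<notin> U) (filtermap f F)"
        using F(2) by (auto simp: eventually_filtermap)
      moreover have "eventually (\<lambda>y. y \<in> U) (nhds l)" using U by (rule eventually_nhds_in_open)
      ultimately have "eventually (\<lambda>_. False) (inf (nhds l) (filtermap f F))"
        unfolding eventually_inf by blast
      then show False using l by simp
    qed
  qed
  then show ?thesis using F(1) tendsto_Lim by metis
qed

lemma ultrafilter_Lim_is_character:
  assumes S: "cstar_subalgebra S" "(\<lambda>_. 1) \<in> S"
    and F: "F \<noteq> bot" "\<And>P. eventually P F \<or> eventually (\<lambda>x. \<not> P x) F"
  shows "is_character S (\<lambda>f. Lim F f)"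
proof -
  have lim: "(f \<longlongrightarrow> Lim F f) F" if "f \<in> S" for f
    by (rule ultrafilter_tendsto_Lim[OF F cstar_subalgebra_bounded[OF S(1) that]])
  have Lim_eq: "Lim F f = l" if "(f \<longlongrightarrow> l) F" for f and l :: complex
    using F(1) that by (rule tendsto_Lim)
  show ?thesis
    unfolding is_character_def
  proof (intro conjI ballI allI)
    fix f g assume "f \<in> S" "g \<in> S"
    then show "Lim F (\<lambda>x. f x + g x) = Lim F f + Lim F g"
      and "Lim F (\<lambda>x. f x * g x) = Lim F f * Lim F g"
      by (auto intro!: Lim_eq tendsto_intros lim)
  next
    fix a f assume "f \<in> S"
    then show "Lim F (\<lambda>x. a * f x) = a * Lim F f" by (auto intro!: Lim_eq tendsto_intros lim)
  next
    show "\<exists>f\<in>S. Lim F f \<noteq> 0" using S(2) Lim_eq[OF tendsto_const, of 1] by force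
  qed
qed

lemma boundary_zero_imp_vanishing_at_infinity:
  fixes u :: "'a \<Rightarrow> complex"
  assumes S: "cstar_subalgebra S" "(\<lambda>_. 1) \<in> S" "Cc \<subseteq> S"
    and u: "u \<in> S" and zero: "\<forall>\<gamma>\<in>boundary S. \<gamma> u = 0" and e: "e > 0"
  shows "finite {x. e \<le> cmod (u x)}"
proof (rule ccontr)
  let ?A = "{x. e \<le> cmod (u x)}"
  assume "infinite ?A"
  then have "inf cofinite (principal ?A) \<noteq> bot"
    by (simp flip: eventually_False add: eventually_inf_principal eventually_cofinite)
  then obtain F where F: "F \<le> inf cofinite (principal ?A)" "F \<noteq> bot"
    "\<And>P. eventually P F \<or> eventually (\<lambda>x. \<not> P x) F"
    using exists_ultrafilter_le by blast
  define \<gamma> where "\<gamma> f = Lim F f" for f :: "'a \<Rightarrow> complex"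
  have char: "is_character S \<gamma>"
    unfolding \<gamma>_def by (rule ultrafilter_Lim_is_character[OF S(1,2) F(2,3)])
  have not_evaluation: "\<gamma> (indicator {s}) \<noteq> indicator {s} s" for s
  proof -
    have "eventually (\<lambda>x. x \<noteq> s) F"
      using filter_leD[OF order_trans[OF F(1) inf_le1]] by (simp add: eventually_cofinite)
    then have "((indicator {s} :: 'a \<Rightarrow> complex) \<longlongrightarrow> 0) F"
      by (rule tendsto_eventually[OF eventually_mono]) simp
    then have "\<gamma> (indicator {s}) = 0" unfolding \<gamma>_def by (rule tendsto_Lim[OF F(2)])
    then show ?thesis by simp
  qed
  have "indicator {s} \<in> S" for s
    using S(3) unfolding Cc_def by (simp add: subset_eq indicator_def)
  then have "\<gamma> \<in> boundary S" using char not_evaluation unfolding boundary_def by blast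
  then have "Lim F u = 0" using zero unfolding \<gamma>_def by blast
  then have "(u \<longlongrightarrow> 0) F"
    using ultrafilter_tendsto_Lim[OF F(2,3) cstar_subalgebra_bounded[OF S(1) u]] by simp
  then have "((\<lambda>x. cmod (u x)) \<longlongrightarrow> 0) F" by (rule tendsto_norm_zero)
  moreover have "eventually (\<lambda>x. e \<le> cmod (u x)) F"
    using filter_leD[OF order_trans[OF F(1) inf_le2]] by (simp add: eventually_principal)
  ultimately have "e \<le> 0" by (rule tendsto_lowerbound[OF _ _ F(2)])
  then show False using e by simp
qed

section \<open>The Dirichlet space\<close>

lemma
  assumes "weighted_graph b c"
  shows weighted_graph_nonneg: "0 \<le> b x y"
    and weighted_graph_sym: "b x y = b y x"
    and weighted_graph_summable: "(\<lambda>y. b x y) summable_on UNIV"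
    and weighted_graph_potential_nonneg: "0 \<le> c x"
  using assms unfolding weighted_graph_def by blast+

lemma mem_Dt_iff:
  "f \<in> Dt b c \<longleftrightarrow> (\<lambda>(x, y). b x y * (cmod (f x - f y))\<^sup>2) summable_on UNIV \<and>
     (\<lambda>x. c x * (cmod (f x))\<^sup>2) summable_on UNIV"
  by (simp add: Dt_def in_Dt_def)

lemma
  assumes "weighted_graph b c"
  shows edge_energy_nonneg: "0 \<le> (\<Sum>\<^sub>\<infinity>(x, y). b x y * (cmod (f x - f y))\<^sup>2)"
    and vertex_energy_nonneg: "0 \<le> (\<Sum>\<^sub>\<infinity>x. c x * (cmod (f x))\<^sup>2)"
  using assms by (auto intro!: infsum_nonneg simp: weighted_graph_nonneg weighted_graph_potential_nonneg)

lemma Qt_nonneg: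
  assumes "weighted_graph b c"
  shows "0 \<le> Qt b c f"
  unfolding Qt_def using edge_energy_nonneg[OF assms, of f] vertex_energy_nonneg[OF assms, of f] by simp

lemma norm_o_sq:
  assumes "weighted_graph b c"
  shows "(norm_o b c v0 f)\<^sup>2 = Qt b c f + (cmod (f v0))\<^sup>2"
  unfolding norm_o_def using Qt_nonneg[OF assms, of f] by simp

lemma norm_o_nonneg:
  assumes "weighted_graph b c"
  shows "0 \<le> norm_o b c v0 f"
  unfolding norm_o_def using Qt_nonneg[OF assms, of f] by simp

lemma norm_o_ge_vertex:
  assumes "weighted_graph b c"
  shows "cmod (f v0) \<le> norm_o b c v0 f"
proof -
  have "(cmod (f v0))\<^sup>2 \<le> (norm_o b c v0 f)\<^sup>2"
    using norm_o_sq[OF assms] edge_energy_nonneg[OF assms, of f] vertex_energy_nonneg[OF assms, of f]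
    unfolding Qt_def by simp
  then show ?thesis using norm_o_nonneg[OF assms] by (rule power2_le_imp_le)
qed

lemma finite_edge_energy_le:
  assumes G: "weighted_graph b c" and f: "f \<in> Dt b c" and P: "finite P"
  shows "(\<Sum>(x, y)\<in>P. b x y * (cmod (f x - f y))\<^sup>2) \<le> 2 * (norm_o b c v0 f)\<^sup>2"
proof -
  have "(\<Sum>(x, y)\<in>P. b x y * (cmod (f x - f y))\<^sup>2) \<le> (\<Sum>\<^sub>\<infinity>(x, y). b x y * (cmod (f x - f y))\<^sup>2)"
    using f P by (intro finite_sum_le_infsum) (auto simp: mem_Dt_iff weighted_graph_nonneg[OF G])
  also have "\<dots> \<le> 2 * (norm_o b c v0 f)\<^sup>2"
    using norm_o_sq[OF G] vertex_energy_nonneg[OF G, of f] unfolding Qt_def by simp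
  finally show ?thesis .
qed

lemma finite_vertex_energy_le:
  assumes G: "weighted_graph b c" and f: "f \<in> Dt b c" and P: "finite P"
  shows "(\<Sum>x\<in>P. c x * (cmod (f x))\<^sup>2) \<le> (norm_o b c v0 f)\<^sup>2"
proof -
  have "(\<Sum>x\<in>P. c x * (cmod (f x))\<^sup>2) \<le> (\<Sum>\<^sub>\<infinity>x. c x * (cmod (f x))\<^sup>2)"
    using f P by (intro finite_sum_le_infsum) (auto simp: mem_Dt_iff weighted_graph_potential_nonneg[OF G])
  also have "\<dots> \<le> (norm_o b c v0 f)\<^sup>2"
    using norm_o_sq[OF G] edge_energy_nonneg[OF G, of f] unfolding Qt_def by simp
  finally show ?thesis .
qed

lemma norm_o_scale:
  "norm_o b c v0 (\<lambda>x. a * f x) = cmod a * norm_o b c v0 f"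
proof -
  have "(\<Sum>\<^sub>\<infinity>(x, y). b x y * (cmod (a * f x - a * f y))\<^sup>2)
      = (\<Sum>\<^sub>\<infinity>p. (cmod a)\<^sup>2 * (case p of (x, y) \<Rightarrow> b x y * (cmod (f x - f y))\<^sup>2))"
    by (intro infsum_cong) (auto simp: norm_mult power_mult_distrib simp flip: right_diff_distrib)
  moreover have "(\<Sum>\<^sub>\<infinity>x. c x * (cmod (a * f x))\<^sup>2) = (\<Sum>\<^sub>\<infinity>x. (cmod a)\<^sup>2 * (c x * (cmod (f x))\<^sup>2))"
    by (intro infsum_cong) (simp add: norm_mult power_mult_distrib)
  ultimately have "Qt b c (\<lambda>x. a * f x) + (cmod (a * f v0))\<^sup>2 = (cmod a)\<^sup>2 * (Qt b c f + (cmod (f v0))\<^sup>2)"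
    unfolding Qt_def infsum_cmult_right' by (simp add: norm_mult power_mult_distrib algebra_simps)
  then show ?thesis
    unfolding norm_o_def by (simp add: real_sqrt_mult)
qed

lemma norm_add_sq_le:
  fixes z w :: "'a::real_normed_vector"
  shows "(norm (z + w))\<^sup>2 \<le> 2 * (norm z)\<^sup>2 + 2 * (norm w)\<^sup>2"
proof -
  have "(norm (z + w))\<^sup>2 \<le> (norm z + norm w)\<^sup>2"
    by (intro power_mono norm_triangle_ineq) simp
  also have "\<dots> \<le> 2 * (norm z)\<^sup>2 + 2 * (norm w)\<^sup>2"
    using sum_squares_bound[of "norm z" "norm w"] by (simp add: power2_eq_square algebra_simps)
  finally show ?thesis .
qed

lemma zero_in_Dt: "(\<lambda>_. 0) \<in> Dt b c"
  by (simp add: mem_Dt_iff case_prod_unfold)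

lemma Dt_lincomb:
  assumes G: "weighted_graph b c" and f: "f \<in> Dt b c" and g: "g \<in> Dt b c"
  shows "(\<lambda>x. a * f x + g x) \<in> Dt b c"
  unfolding mem_Dt_iff
proof
  let ?E = "\<lambda>f (x, y). b x y * (cmod (f x - f y))\<^sup>2"
  have "(\<lambda>p. 2 * (cmod a)\<^sup>2 * ?E f p + 2 * ?E g p) summable_on UNIV"
    using f g unfolding mem_Dt_iff by (intro summable_on_add summable_on_cmult_right) auto
  then show "?E (\<lambda>x. a * f x + g x) summable_on UNIV"
  proof (rule summable_on_comparison_test)
    fix p :: "'a \<times> 'a"
    obtain x y where p: "p = (x, y)" by (cases p)
    have "a * f x + g x - (a * f y + g y) = a * (f x - f y) + (g x - g y)"
      by (simp add: algebra_simps)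
    then have "(cmod (a * f x + g x - (a * f y + g y)))\<^sup>2 \<le> 2 * (cmod a)\<^sup>2 * (cmod (f x - f y))\<^sup>2 + 2 * (cmod (g x - g y))\<^sup>2"
      using norm_add_sq_le[of "a * (f x - f y)" "g x - g y"]
      by (simp only: norm_mult power_mult_distrib mult.assoc)
    then show "?E (\<lambda>x. a * f x + g x) p \<le> 2 * (cmod a)\<^sup>2 * ?E f p + 2 * ?E g p"
      using weighted_graph_nonneg[OF G, of x y] unfolding p
      by (auto dest: mult_left_mono[where c = "b x y"] simp: algebra_simps)
    show "0 \<le> ?E (\<lambda>x. a * f x + g x) p" using weighted_graph_nonneg[OF G] by (simp add: p)
  qed
next
  let ?V = "\<lambda>f x. c x * (cmod (f x))\<^sup>2"
  have "(\<lambda>x. 2 * (cmod a)\<^sup>2 * ?V f x + 2 * ?V g x) summable_on UNIV"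
    using f g unfolding mem_Dt_iff by (intro summable_on_add summable_on_cmult_right) auto
  then show "?V (\<lambda>x. a * f x + g x) summable_on UNIV"
  proof (rule summable_on_comparison_test)
    fix x
    have "(cmod (a * f x + g x))\<^sup>2 \<le> 2 * (cmod a)\<^sup>2 * (cmod (f x))\<^sup>2 + 2 * (cmod (g x))\<^sup>2"
      using norm_add_sq_le[of "a * f x" "g x"] by (simp add: norm_mult power_mult_distrib)
    then show "?V (\<lambda>x. a * f x + g x) x \<le> 2 * (cmod a)\<^sup>2 * ?V f x + 2 * ?V g x"
      using weighted_graph_potential_nonneg[OF G, of x]
      by (auto dest: mult_left_mono[where c = "c x"] simp: algebra_simps)
    show "0 \<le> ?V (\<lambda>x. a * f x + g x) x" using weighted_graph_potential_nonneg[OF G] by simp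
  qed
qed

lemma Dt_scale: "weighted_graph b c \<Longrightarrow> f \<in> Dt b c \<Longrightarrow> (\<lambda>x. a * f x) \<in> Dt b c"
  using Dt_lincomb[OF _ _ zero_in_Dt] by simp

lemma Dt_diff: "weighted_graph b c \<Longrightarrow> f \<in> Dt b c \<Longrightarrow> g \<in> Dt b c \<Longrightarrow> (\<lambda>x. f x - g x) \<in> Dt b c"
  using Dt_lincomb[of b c g f "-1"] by simp

lemma indicator_in_Dt:
  assumes G: "weighted_graph b c"
  shows "(indicator {s} :: _ \<Rightarrow> complex) \<in> Dt b c"
  unfolding mem_Dt_iff
proof
  define row where "row p = (if fst p = s then b s (snd p) else 0)" for p
  have "(row \<circ> Pair s) summable_on UNIV"
    using weighted_graph_summable[OF G, of s] by (simp add: row_def o_def)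
  then have "row summable_on range (Pair s)"
    by (subst summable_on_reindex) (auto simp: inj_on_def)
  then have row: "row summable_on UNIV"
    by (rule summable_on_cong_neutral[THEN iffD1, rotated -1]) (auto simp: row_def)
  then have "(row \<circ> prod.swap) summable_on UNIV"
    by (subst summable_on_reindex[symmetric]) auto
  then have "(\<lambda>p. row p + (row \<circ> prod.swap) p) summable_on UNIV"
    using row by (rule summable_on_add[rotated])
  then show "(\<lambda>(x, y). b x y * (cmod (indicator {s} x - indicator {s} y :: complex))\<^sup>2) summable_on UNIV"
  proof (rule summable_on_comparison_test)
    fix p :: "'a \<times> 'a"
    obtain x y where p: "p = (x, y)" by (cases p)
    show "(\<lambda>(x, y). b x y * (cmod (indicator {s} x - indicator {s} y :: complex))\<^sup>2) p
        \<le> row p + (row \<circ> prod.swap) p"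
      using weighted_graph_nonneg[OF G] weighted_graph_sym[OF G, of x y]
      by (auto simp: p row_def indicator_def)
    show "0 \<le> (\<lambda>(x, y). b x y * (cmod (indicator {s} x - indicator {s} y :: complex))\<^sup>2) p"
      using weighted_graph_nonneg[OF G] by (simp add: p)
  qed
next
  show "(\<lambda>x. c x * (cmod (indicator {s} x :: complex))\<^sup>2) summable_on UNIV"
    by (rule summable_on_cong_neutral[where S = "{s}", THEN iffD1]) (auto simp: indicator_def)
qed

lemma Cc_subset_Dt:
  assumes G: "weighted_graph b c"
  shows "Cc \<subseteq> Dt b c"
proof
  have "g \<in> Dt b c" if "finite T" "{x. g x \<noteq> 0} \<subseteq> T" for T g
    using that
  proof (induction T arbitrary: g rule: finite_induct)
    case empty
    then have "g = (\<lambda>_. 0)" by auto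
    then show ?case using zero_in_Dt by simp
  next
    case (insert s T)
    define h where "h x = g x - g s * indicator {s} x" for x
    have "{x. h x \<noteq> 0} \<subseteq> T" using insert.prems by (auto simp: h_def indicator_def)
    then have "h \<in> Dt b c" by (rule insert.IH)
    moreover have "g = (\<lambda>x. g s * indicator {s} x + h x)" by (simp add: h_def)
    ultimately show ?case using Dt_lincomb[OF G indicator_in_Dt[OF G]] by metis
  qed
  then show "g \<in> Dt b c" if "g \<in> Cc" for g using that unfolding Cc_def by blast
qed

lemma edge_difference_le:
  assumes G: "weighted_graph b c" and f: "f \<in> Dt b c" and bxy: "0 < b x y"
  shows "cmod (f x - f y) \<le> sqrt (2 / b x y) * norm_o b c v0 f"
proof (rule power2_le_imp_le)
  have "b x y * (cmod (f x - f y))\<^sup>2 \<le> 2 * (norm_o b c v0 f)\<^sup>2"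
    using finite_edge_energy_le[OF G f, of "{(x, y)}" v0] by simp
  then show "(cmod (f x - f y))\<^sup>2 \<le> (sqrt (2 / b x y) * norm_o b c v0 f)\<^sup>2"
    using bxy by (simp add: power_mult_distrib field_simps)
  show "0 \<le> sqrt (2 / b x y) * norm_o b c v0 f"
    using bxy norm_o_nonneg[OF G] by simp
qed

lemma norm_o_pointwise_bound:
  assumes G: "weighted_graph b c" and conn: "graph_connected b"
  shows "\<exists>K\<ge>0. \<forall>f\<in>Dt b c. cmod (f x) \<le> K * norm_o b c v0 f"
proof -
  define R where "R = {x. \<exists>K\<ge>0. \<forall>f\<in>Dt b c. cmod (f x) \<le> K * norm_o b c v0 f}"
  have base: "v0 \<in> R"
    unfolding R_def using norm_o_ge_vertex[OF G] by (intro CollectI exI[of _ 1]) auto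
  have step: "y \<in> R" if "z \<in> R" and bzy: "0 < b z y" for y z
  proof -
    obtain K where K: "K \<ge> 0" "\<And>f. f \<in> Dt b c \<Longrightarrow> cmod (f z) \<le> K * norm_o b c v0 f"
      using \<open>z \<in> R\<close> unfolding R_def by blast
    have "cmod (f y) \<le> (K + sqrt (2 / b z y)) * norm_o b c v0 f" if f: "f \<in> Dt b c" for f
    proof -
      have "cmod (f y) \<le> cmod (f z) + cmod (f z - f y)"
        using norm_triangle_ineq2[of "f y" "f z"] by (simp add: norm_minus_commute)
      also have "\<dots> \<le> K * norm_o b c v0 f + sqrt (2 / b z y) * norm_o b c v0 f"
        using K(2)[OF f] edge_difference_le[OF G f bzy] by (rule add_mono)
      finally show ?thesis by (simp add: algebra_simps)
    qed
    then show ?thesis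
      unfolding R_def using K(1) bzy by (intro CollectI exI[of _ "K + sqrt (2 / b z y)"]) auto
  qed
  have "x \<in> R"
  proof (cases "x = v0")
    case False
    then obtain p where p: "p \<noteq> []" "hd p = v0" "last p = x"
      and edges: "\<And>i. Suc i < length p \<Longrightarrow> 0 < b (p ! i) (p ! Suc i)"
      using conn unfolding graph_connected_def by metis
    have "i < length p \<longrightarrow> p ! i \<in> R" for i
      by (induction i) (use p base step edges in \<open>auto simp: hd_conv_nth\<close>)
    then have "p ! (length p - 1) \<in> R" using p(1) by simp
    then show ?thesis using p by (simp add: last_conv_nth)
  qed (use base in simp)
  then show ?thesis unfolding R_def by blast
qed

lemma geometric_sum_quarter_le: "(\<Sum>n<N. (1/4::real) ^ n) \<le> 4/3"
proof -
  have "(\<Sum>n<N. (1/4::real) ^ n) \<le> (\<Sum>n. (1/4) ^ n)"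
    by (intro sum_le_suminf summable_geometric) auto
  also have "\<dots> = 4/3" by (simp add: suminf_geometric)
  finally show ?thesis .
qed

lemma square_sum_le_weighted: "(\<Sum>n<N. a n)\<^sup>2 \<le> 4/3 * (\<Sum>n<N. 4 ^ n * (a n :: real)\<^sup>2)"
proof -
  have "(\<Sum>n<N. a n)\<^sup>2 = (\<Sum>n<N. (1/2) ^ n * (2 ^ n * a n))\<^sup>2"
    by (simp add: power_one_over)
  also have "\<dots> \<le> (\<Sum>n<N. ((1/2) ^ n)\<^sup>2) * (\<Sum>n<N. (2 ^ n * a n)\<^sup>2)"
    by (rule Cauchy_Schwarz_ineq_sum)
  also have "\<dots> = (\<Sum>n<N. (1/4) ^ n) * (\<Sum>n<N. 4 ^ n * (a n)\<^sup>2)"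
  proof -
    have "((1/2) ^ n)\<^sup>2 = ((1/4) ^ n :: real)" "(2 ^ n * a n)\<^sup>2 = 4 ^ n * (a n)\<^sup>2" for n
      by (simp_all add: power2_eq_square flip: power_mult_distrib)
    then show ?thesis by simp
  qed
  also have "\<dots> \<le> 4/3 * (\<Sum>n<N. 4 ^ n * (a n)\<^sup>2)"
    by (intro mult_right_mono geometric_sum_quarter_le sum_nonneg) auto
  finally show ?thesis .
qed

lemma weighted_square_series_le:
  fixes w :: "'p \<Rightarrow> real" and d :: "nat \<Rightarrow> 'p \<Rightarrow> real"
  assumes P: "finite P" and w: "\<And>p. 0 \<le> w p"
    and d: "\<And>n. (\<Sum>p\<in>P. w p * (d n p)\<^sup>2) \<le> C * (1/16) ^ n"
  shows "(\<Sum>p\<in>P. w p * (\<Sum>n<N. d n p)\<^sup>2) \<le> 2 * C"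
proof -
  have C: "0 \<le> C" using d[of 0] sum_nonneg[of P "\<lambda>p. w p * (d 0 p)\<^sup>2"] w by simp
  have "(\<Sum>p\<in>P. w p * (\<Sum>n<N. d n p)\<^sup>2) \<le> (\<Sum>p\<in>P. w p * (4/3 * (\<Sum>n<N. 4 ^ n * (d n p)\<^sup>2)))"
    by (intro sum_mono mult_left_mono square_sum_le_weighted w)
  also have "\<dots> = 4/3 * (\<Sum>n<N. 4 ^ n * (\<Sum>p\<in>P. w p * (d n p)\<^sup>2))"
    by (simp add: sum_distrib_left sum.swap[of _ P] algebra_simps)
  also have "\<dots> \<le> 4/3 * (\<Sum>n<N. 4 ^ n * (C * (1/16) ^ n))"
    by (intro mult_left_mono sum_mono d) auto
  also have "\<dots> = 4/3 * C * (\<Sum>n<N. (1/4) ^ n)"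
    by (simp add: sum_distrib_left algebra_simps flip: power_mult_distrib)
  also have "\<dots> \<le> 4/3 * C * (4/3)"
    using C by (intro mult_left_mono geometric_sum_quarter_le) auto
  finally show ?thesis using C by simp
qed

lemma nonneg_summable_on_if_sums_le:
  fixes f :: "'a \<Rightarrow> real"
  assumes "\<And>p. 0 \<le> f p" and "\<And>F. finite F \<Longrightarrow> sum f F \<le> B"
  shows "f summable_on UNIV"
  using assms by (intro nonneg_bdd_above_summable_on bdd_aboveI2) auto

lemma norm_o_sq_le_sixteenth_power:
  assumes "weighted_graph b c" "norm_o b c v0 f \<le> (1/4) ^ n"
  shows "(norm_o b c v0 f)\<^sup>2 \<le> (1/16) ^ n"
proof -
  have "(norm_o b c v0 f)\<^sup>2 \<le> ((1/4) ^ n)\<^sup>2" by (rule power_mono[OF assms(2) norm_o_nonneg[OF assms(1)]])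
  also have "\<dots> = (1/16) ^ n" by (simp add: power2_eq_square flip: power_mult_distrib)
  finally show ?thesis .
qed

lemma partial_sums_edge_energy_le:
  assumes G: "weighted_graph b c"
    and h: "\<And>n. h n \<in> Dt b c" "\<And>n. norm_o b c v0 (h n) \<le> (1/4) ^ n" and P: "finite P"
  shows "(\<Sum>(x, y)\<in>P. b x y * ((\<Sum>n<N. cmod (h n x)) - (\<Sum>n<N. cmod (h n y)))\<^sup>2) \<le> 4"
proof -
  let ?d = "\<lambda>n p. cmod (h n (fst p) - h n (snd p))"
  have "(\<Sum>(x, y)\<in>P. b x y * ((\<Sum>n<N. cmod (h n x)) - (\<Sum>n<N. cmod (h n y)))\<^sup>2)
      \<le> (\<Sum>p\<in>P. b (fst p) (snd p) * (\<Sum>n<N. ?d n p)\<^sup>2)"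
  proof (intro sum_mono)
    fix p :: "'a \<times> 'a"
    obtain x y where p: "p = (x, y)" by (cases p)
    have "\<bar>(\<Sum>n<N. cmod (h n x)) - (\<Sum>n<N. cmod (h n y))\<bar> = \<bar>\<Sum>n<N. cmod (h n x) - cmod (h n y)\<bar>"
      by (simp add: sum_subtractf)
    also have "\<dots> \<le> (\<Sum>n<N. cmod (h n x - h n y))"
      by (rule order_trans[OF sum_abs sum_mono[OF norm_triangle_ineq3]])
    finally have "((\<Sum>n<N. cmod (h n x)) - (\<Sum>n<N. cmod (h n y)))\<^sup>2 \<le> (\<Sum>n<N. cmod (h n x - h n y))\<^sup>2"
      by (metis abs_ge_zero power2_abs power_mono)
    then show "(case p of (x, y) \<Rightarrow> b x y * ((\<Sum>n<N. cmod (h n x)) - (\<Sum>n<N. cmod (h n y)))\<^sup>2)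
        \<le> b (fst p) (snd p) * (\<Sum>n<N. ?d n p)\<^sup>2"
      unfolding p using weighted_graph_nonneg[OF G, of x y] by (simp add: mult_left_mono)
  qed
  also have "\<dots> \<le> 2 * 2"
  proof (rule weighted_square_series_le[OF P weighted_graph_nonneg[OF G]])
    fix n
    have "(\<Sum>p\<in>P. b (fst p) (snd p) * (?d n p)\<^sup>2) \<le> 2 * (norm_o b c v0 (h n))\<^sup>2"
      using finite_edge_energy_le[OF G h(1) P] by (simp add: case_prod_unfold)
    also have "\<dots> \<le> 2 * (1/16) ^ n" using norm_o_sq_le_sixteenth_power[OF G h(2)] by simp
    finally show "(\<Sum>p\<in>P. b (fst p) (snd p) * (?d n p)\<^sup>2) \<le> 2 * (1/16) ^ n" .
  qed
  finally show ?thesis by simp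
qed

lemma partial_sums_vertex_energy_le:
  assumes G: "weighted_graph b c"
    and h: "\<And>n. h n \<in> Dt b c" "\<And>n. norm_o b c v0 (h n) \<le> (1/4) ^ n" and V: "finite V"
  shows "(\<Sum>x\<in>V. c x * (\<Sum>n<N. cmod (h n x))\<^sup>2) \<le> 2"
proof -
  have "(\<Sum>x\<in>V. c x * (\<Sum>n<N. cmod (h n x))\<^sup>2) \<le> 2 * 1"
  proof (rule weighted_square_series_le[OF V weighted_graph_potential_nonneg[OF G]])
    show "(\<Sum>x\<in>V. c x * (cmod (h n x))\<^sup>2) \<le> 1 * (1/16) ^ n" for n
      using order_trans[OF finite_vertex_energy_le[OF G h(1) V] norm_o_sq_le_sixteenth_power[OF G h(2)]]
      by simp
  qed
  then show ?thesis by simp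
qed

lemma series_norm_in_Dt:
  assumes G: "weighted_graph b c"
    and h: "\<And>n. h n \<in> Dt b c" "\<And>n. norm_o b c v0 (h n) \<le> (1/4) ^ n"
    and summable: "\<And>x. summable (\<lambda>n. cmod (h n x))"
  shows "(\<lambda>x. complex_of_real (\<Sum>n. cmod (h n x))) \<in> Dt b c"
proof -
  define T where "T x = (\<Sum>n. cmod (h n x))" for x
  have lim: "(\<lambda>N. \<Sum>n<N. cmod (h n x)) \<longlonglongrightarrow> T x" for x
    unfolding T_def by (rule summable_LIMSEQ[OF summable])
  have edge: "(\<Sum>(x, y)\<in>P. b x y * (T x - T y)\<^sup>2) \<le> 4" if P: "finite P" for P
  proof (rule LIMSEQ_le_const2)
    show "(\<lambda>N. \<Sum>(x, y)\<in>P. b x y * ((\<Sum>n<N. cmod (h n x)) - (\<Sum>n<N. cmod (h n y)))\<^sup>2)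
        \<longlonglongrightarrow> (\<Sum>(x, y)\<in>P. b x y * (T x - T y)\<^sup>2)"
      by (intro tendsto_sum) (auto simp: case_prod_unfold intro!: tendsto_intros lim)
  qed (use partial_sums_edge_energy_le[OF G h P] in blast)
  have vertex: "(\<Sum>x\<in>P. c x * (T x)\<^sup>2) \<le> 2" if P: "finite P" for P
  proof (rule LIMSEQ_le_const2)
    show "(\<lambda>N. \<Sum>x\<in>P. c x * (\<Sum>n<N. cmod (h n x))\<^sup>2) \<longlonglongrightarrow> (\<Sum>x\<in>P. c x * (T x)\<^sup>2)"
      by (intro tendsto_sum tendsto_intros lim)
  qed (use partial_sums_vertex_energy_le[OF G h P] in blast)
  have "(\<lambda>(x, y). b x y * (cmod (complex_of_real (T x) - complex_of_real (T y)))\<^sup>2) summable_on UNIV"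
    using edge weighted_graph_nonneg[OF G]
    by (intro nonneg_summable_on_if_sums_le[where B = 4])
       (auto simp: case_prod_unfold simp flip: of_real_diff)
  moreover have "(\<lambda>x. c x * (cmod (complex_of_real (T x)))\<^sup>2) summable_on UNIV"
    using vertex weighted_graph_potential_nonneg[OF G]
    by (intro nonneg_summable_on_if_sums_le[where B = 2]) auto
  ultimately show ?thesis unfolding mem_Dt_iff T_def by simp
qed

lemma exists_unbounded_in_Dt:
  assumes G: "weighted_graph b c" and conn: "graph_connected b" and F: "\<And>n. F n \<in> Dt b c"
    and FX: "\<And>n. 8 ^ n * norm_o b c v0 (F n) < cmod (F n (X n))"
  shows "\<exists>f\<in>Dt b c. \<not> bounded (range f)"
proof -
  have FX_pos: "0 < cmod (F n (X n))" for n
  proof -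
    have "0 \<le> 8 ^ n * norm_o b c v0 (F n)" by (simp add: norm_o_nonneg[OF G])
    then show ?thesis using FX[of n] by linarith
  qed
  define h where "h n x = complex_of_real (2 ^ n / cmod (F n (X n))) * F n x" for n x
  have h_Dt: "h n \<in> Dt b c" for n
    unfolding h_def by (rule Dt_scale[OF G F])
  have h_norm: "norm_o b c v0 (h n) \<le> (1/4) ^ n" for n
  proof -
    have "norm_o b c v0 (h n) = 2 ^ n / cmod (F n (X n)) * norm_o b c v0 (F n)"
      unfolding h_def norm_o_scale norm_of_real by simp
    also have "\<dots> \<le> 2 ^ n / 8 ^ n"
      using FX[of n] FX_pos[of n] by (simp add: field_simps)
    also have "\<dots> = (1/4) ^ n" by (simp add: power_divide[symmetric])
    finally show ?thesis .
  qed
  have h_summable: "summable (\<lambda>n. cmod (h n x))" for x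
  proof -
    obtain K where K: "K \<ge> 0" "\<And>f. f \<in> Dt b c \<Longrightarrow> cmod (f x) \<le> K * norm_o b c v0 f"
      using norm_o_pointwise_bound[OF G conn, of x v0] by blast
    have "cmod (h n x) \<le> K * (1/4) ^ n" for n
      using K(2)[OF h_Dt] mult_left_mono[OF h_norm K(1)] by (rule order_trans)
    then show ?thesis
      by (intro summable_comparison_test'[OF summable_mult[OF summable_geometric]]) auto
  qed
  have "\<not> bounded (range (\<lambda>x. complex_of_real (\<Sum>n. cmod (h n x))))"
  proof
    assume "bounded (range (\<lambda>x. complex_of_real (\<Sum>n. cmod (h n x))))"
    then obtain B where B: "\<And>x. (\<Sum>n. cmod (h n x)) \<le> B"
      unfolding bounded_iff by (auto dest: order_trans[OF abs_ge_self])
    obtain n where "B < 2 ^ n" using real_arch_pow[of 2 B] by auto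
    also have "2 ^ n = cmod (h n (X n))"
      unfolding h_def norm_mult norm_of_real using FX_pos[of n] by simp
    also have "\<dots> \<le> (\<Sum>m<Suc n. cmod (h m (X n)))"
      by (rule member_le_sum) auto
    also have "\<dots> \<le> (\<Sum>m. cmod (h m (X n)))"
      by (intro sum_le_suminf h_summable) auto
    finally show False using B[of "X n"] by simp
  qed
  then show ?thesis using series_norm_in_Dt[OF G h_Dt h_norm h_summable] by blast
qed

lemma norm_o_uniform_bound:
  assumes G: "weighted_graph b c" and conn: "graph_connected b"
    and cc: "canonically_compactifiable b c"
  shows "\<exists>C\<ge>0. \<forall>f\<in>Dt b c. \<forall>x. cmod (f x) \<le> C * norm_o b c v0 f"
proof (rule ccontr)
  assume "\<not> ?thesis"
  then have "\<exists>f x. f \<in> Dt b c \<and> 8 ^ n * norm_o b c v0 f < cmod (f x)" for n :: nat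
    by (metis not_le zero_le_numeral zero_le_power)
  then obtain F X where "\<And>n. F n \<in> Dt b c" "\<And>n. 8 ^ n * norm_o b c v0 (F n) < cmod (F n (X n))"
    by metis
  then show False
    using exists_unbounded_in_Dt[OF G conn] cc unfolding canonically_compactifiable_def by blast
qed

section \<open>Approximation in \<open>\<parallel>\<cdot>\<parallel>\<^sub>o\<close>\<close>

lemma Dt_o_uniform_approx:
  assumes G: "weighted_graph b c" and conn: "graph_connected b"
    and cc: "canonically_compactifiable b c" and u: "u \<in> Dt_o b c v0" and e: "e > 0"
  shows "\<exists>g\<in>Cc. \<forall>x. cmod (u x - g x) \<le> e"
proof -
  obtain C where C: "C \<ge> 0" "\<And>f x. f \<in> Dt b c \<Longrightarrow> cmod (f x) \<le> C * norm_o b c v0 f"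
    using norm_o_uniform_bound[OF G conn cc, of v0] by blast
  have "0 < e / (C + 1)" using e C(1) by simp
  then obtain g where g: "g \<in> Cc" "norm_o b c v0 (\<lambda>x. u x - g x) < e / (C + 1)"
    using u unfolding Dt_o_def by blast
  have "(\<lambda>x. u x - g x) \<in> Dt b c"
    using u g(1) Cc_subset_Dt[OF G] unfolding Dt_o_def by (auto intro: Dt_diff[OF G])
  from C(2)[OF this] have "cmod (u x - g x) \<le> C * norm_o b c v0 (\<lambda>x. u x - g x)" for x
    by simp
  also have "\<dots> \<le> C * (e / (C + 1))"
    by (rule mult_left_mono[OF less_imp_le[OF g(2)] C(1)])
  also have "\<dots> \<le> e"
    using C(1) e by (simp add: field_simps)
  finally show ?thesis using g(1) by blast
qed

lemma infsum_dominated_le_sum_plus: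
  fixes f :: "'a \<Rightarrow> real"
  assumes f: "f summable_on UNIV" "\<And>p. 0 \<le> f p" and d: "d > 0"
  obtains T where "finite T"
    "\<And>h. (\<And>p. 0 \<le> h p) \<Longrightarrow> (\<And>p. h p \<le> f p) \<Longrightarrow> infsum h UNIV \<le> sum h T + d"
proof -
  obtain T where T: "finite T" "dist (sum f T) (infsum f UNIV) \<le> d"
    using infsum_finite_approximation[OF f(1) d] by blast
  have "infsum h UNIV \<le> sum h T + d" if h: "\<And>p. 0 \<le> h p" "\<And>p. h p \<le> f p" for h
  proof -
    have hs: "h summable_on UNIV" by (rule summable_on_comparison_test[OF f(1)]) (use h in auto)
    have fT: "f summable_on - T" and hT: "h summable_on - T"
      by (auto intro: summable_on_subset[OF f(1)] summable_on_subset[OF hs])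
    have split: "infsum k UNIV = sum k T + infsum k (- T)" if "k summable_on - T" for k :: "'a \<Rightarrow> real"
      using infsum_Un_disjoint[of k T "- T"] T(1) that by (simp add: Un_commute)
    have "infsum h UNIV = sum h T + infsum h (- T)" by (rule split[OF hT])
    also have "\<dots> \<le> sum h T + infsum f (- T)" using h by (simp add: infsum_mono[OF hT fT])
    also have "infsum f (- T) = infsum f UNIV - sum f T" using split[OF fT] by simp
    also have "\<dots> \<le> d" using T(2) by (simp add: dist_real_def)
    finally show ?thesis by simp
  qed
  then show thesis using T(1) that by blast
qed

lemma Qt_le_if_dominated:
  assumes G: "weighted_graph b c" and u: "u \<in> Dt b c" and d: "d > 0"
  obtains K where "K \<ge> 0"
    "\<And>w r. (\<And>x. cmod (w x) \<le> r) \<Longrightarrow> (\<And>x. cmod (w x) \<le> cmod (u x))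
      \<Longrightarrow> (\<And>x y. cmod (w x - w y) \<le> cmod (u x - u y)) \<Longrightarrow> Qt b c w \<le> K * r\<^sup>2 + d"
proof -
  note b0 = weighted_graph_nonneg[OF G] and c0 = weighted_graph_potential_nonneg[OF G]
  obtain T1 where T1: "finite T1" "\<And>h. (\<And>p. 0 \<le> h p)
      \<Longrightarrow> (\<And>p. h p \<le> (\<lambda>(x, y). b x y * (cmod (u x - u y))\<^sup>2) p) \<Longrightarrow> infsum h UNIV \<le> sum h T1 + d"
    by (rule infsum_dominated_le_sum_plus[of "\<lambda>(x, y). b x y * (cmod (u x - u y))\<^sup>2" d])
      (use u d b0 in \<open>auto simp: mem_Dt_iff\<close>)
  obtain T2 where T2: "finite T2" "\<And>h. (\<And>p. 0 \<le> h p)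
      \<Longrightarrow> (\<And>p. h p \<le> c p * (cmod (u p))\<^sup>2) \<Longrightarrow> infsum h UNIV \<le> sum h T2 + d / 2"
    by (rule infsum_dominated_le_sum_plus[of "\<lambda>x. c x * (cmod (u x))\<^sup>2" "d / 2"])
      (use u d c0 in \<open>auto simp: mem_Dt_iff\<close>)
  define K where "K = 2 * (\<Sum>(x, y)\<in>T1. b x y) + (\<Sum>x\<in>T2. c x)"
  have "K \<ge> 0" unfolding K_def using b0 c0 by (auto intro!: add_nonneg_nonneg sum_nonneg)
  moreover have "Qt b c w \<le> K * r\<^sup>2 + d"
    if r: "\<And>x. cmod (w x) \<le> r" and wu: "\<And>x. cmod (w x) \<le> cmod (u x)"
      and lip: "\<And>x y. cmod (w x - w y) \<le> cmod (u x - u y)" for w r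
  proof -
    have "(\<Sum>\<^sub>\<infinity>(x, y). b x y * (cmod (w x - w y))\<^sup>2) \<le> (\<Sum>(x, y)\<in>T1. b x y * (cmod (w x - w y))\<^sup>2) + d"
      using b0 lip by (intro T1(2)) (auto intro!: mult_left_mono power_mono)
    also have "\<dots> \<le> (\<Sum>(x, y)\<in>T1. b x y * (2 * r)\<^sup>2) + d"
    proof -
      have "(cmod (w x - w y))\<^sup>2 \<le> (2 * r)\<^sup>2" for x y
        using norm_triangle_ineq4[of "w x" "w y"] r[of x] r[of y] by (intro power_mono) auto
      then show ?thesis
        using b0 by (auto intro!: sum_mono mult_left_mono)
    qed
    finally have E: "(\<Sum>\<^sub>\<infinity>(x, y). b x y * (cmod (w x - w y))\<^sup>2) \<le> 4 * r\<^sup>2 * (\<Sum>(x, y)\<in>T1. b x y) + d"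
      by (simp add: sum_distrib_left case_prod_unfold algebra_simps power_mult_distrib)
    have "(\<Sum>\<^sub>\<infinity>x. c x * (cmod (w x))\<^sup>2) \<le> (\<Sum>x\<in>T2. c x * (cmod (w x))\<^sup>2) + d / 2"
      using c0 wu by (intro T2(2)) (auto intro!: mult_left_mono power_mono)
    also have "\<dots> \<le> (\<Sum>x\<in>T2. c x * r\<^sup>2) + d / 2"
      using c0 r by (auto intro!: sum_mono mult_left_mono power_mono)
    finally have V: "(\<Sum>\<^sub>\<infinity>x. c x * (cmod (w x))\<^sup>2) \<le> r\<^sup>2 * (\<Sum>x\<in>T2. c x) + d / 2"
      by (simp add: sum_distrib_right algebra_simps)
    show ?thesis using E V unfolding Qt_def K_def by (simp add: algebra_simps)
  qed
  ultimately show thesis using that by blast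
qed

lemma
  fixes z w :: "'a::euclidean_space"
  assumes r: "0 \<le> r"
  shows norm_closest_point_cball_le_radius: "norm (closest_point (cball 0 r) z) \<le> r"
    and closest_point_cball_lipschitz:
      "norm (closest_point (cball 0 r) z - closest_point (cball 0 r) w) \<le> norm (z - w)"
    and closest_point_cball_eq: "norm z \<le> r \<Longrightarrow> closest_point (cball 0 r) z = z"
    and norm_closest_point_cball_le: "norm (closest_point (cball 0 r) z) \<le> norm z"
proof -
  have ne: "cball (0::'a) r \<noteq> {}" using r by auto
  show "norm (closest_point (cball 0 r) z) \<le> r"
    using closest_point_in_set[OF closed_cball ne, of z] by simp
  show lip: "norm (closest_point (cball 0 r) z - closest_point (cball 0 r) w) \<le> norm (z - w)" for z w :: 'a
    using closest_point_lipschitz[OF convex_cball closed_cball ne, of z w] by (simp add: dist_norm)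
  show self: "norm z \<le> r \<Longrightarrow> closest_point (cball 0 r) z = z" for z :: 'a
    by (rule closest_point_self) simp
  show "norm (closest_point (cball 0 r) z) \<le> norm z"
    using lip[of z 0] self[of 0] r by simp
qed

lemma vanishing_at_infinity_imp_Dt_o:
  assumes G: "weighted_graph b c" and u: "u \<in> Dt b c"
    and vanish: "\<And>r. r > 0 \<Longrightarrow> finite {x. r \<le> cmod (u x)}"
  shows "u \<in> Dt_o b c v0"
  unfolding Dt_o_def
proof (intro CollectI conjI allI impI u)
  fix e :: real assume e: "e > 0"
  have d: "0 < e\<^sup>2 / 2" using e by simp
  obtain K where K: "K \<ge> 0" "\<And>w r. (\<And>x. cmod (w x) \<le> r) \<Longrightarrow> (\<And>x. cmod (w x) \<le> cmod (u x))
      \<Longrightarrow> (\<And>x y. cmod (w x - w y) \<le> cmod (u x - u y)) \<Longrightarrow> Qt b c w \<le> K * r\<^sup>2 + e\<^sup>2 / 2"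
    using Qt_le_if_dominated[OF G u d] by blast
  define r where "r = e / (2 * sqrt (K + 1))"
  have r: "0 < r" "(K + 1) * r\<^sup>2 = e\<^sup>2 / 4"
    using e K(1) by (auto simp: r_def power_divide power_mult_distrib field_simps)
  define w where "w x = closest_point (cball 0 r) (u x)" for x
  have w_le: "cmod (w x) \<le> r" for x
    unfolding w_def using less_imp_le[OF r(1)] by (rule norm_closest_point_cball_le_radius)
  have "Qt b c w \<le> K * r\<^sup>2 + e\<^sup>2 / 2"
    using less_imp_le[OF r(1)]
    by (intro K(2)) (simp_all add: w_def norm_closest_point_cball_le_radius
        norm_closest_point_cball_le closest_point_cball_lipschitz)
  then have "(norm_o b c v0 w)\<^sup>2 \<le> (K + 1) * r\<^sup>2 + e\<^sup>2 / 2"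
    using norm_o_sq[OF G, of v0 w] power_mono[OF w_le[of v0] norm_ge_zero, of 2]
    by (simp add: algebra_simps)
  also have "\<dots> < e\<^sup>2" using r(2) zero_less_power[OF e, of 2] by linarith
  finally have "norm_o b c v0 w < e"
    using e norm_o_nonneg[OF G] by (simp add: power_less_imp_less_base)
  moreover have "(\<lambda>x. u x - w x) \<in> Cc"
  proof -
    have "w x = u x" if "cmod (u x) < r" for x
      unfolding w_def using that r(1) by (simp add: closest_point_cball_eq)
    then have "{x. u x - w x \<noteq> 0} \<subseteq> {x. r \<le> cmod (u x)}"
      using not_le by fastforce
    then show ?thesis unfolding Cc_def using vanish[OF r(1)] by (auto intro: finite_subset)
  qed
  ultimately show "\<exists>g\<in>Cc. norm_o b c v0 (\<lambda>x. u x - g x) < e"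
    by (intro bexI[of _ "\<lambda>x. u x - w x"]) simp_all
qed

lemma Dt_o_boundary_vanishing:
  assumes G: "weighted_graph b c" and conn: "graph_connected b"
    and cc: "canonically_compactifiable b c"
    and u: "u \<in> Dt_o b c v0" and \<gamma>: "\<gamma> \<in> boundary (Aplus b c)"
  shows "\<gamma> u = 0"
proof (rule character_vanishes_on_uniform_limit[OF cstar_subalgebra_Aplus one_in_Aplus
      boundary_is_character[OF \<gamma>]])
  have Dt_A: "Dt b c \<subseteq> Aplus b c" by (rule Dt_subset_Aplus[OF cc])
  then have Cc_A: "Cc \<subseteq> Aplus b c" using Cc_subset_Dt[OF G] by blast
  show "u \<in> Aplus b c" using u Dt_A unfolding Dt_o_def by blast
  fix e :: real assume "e > 0"
  then obtain g where "g \<in> Cc" "\<forall>x. cmod (u x - g x) \<le> e"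
    using Dt_o_uniform_approx[OF G conn cc u] by blast
  then show "\<exists>g\<in>Aplus b c. \<gamma> g = 0 \<and> (\<forall>x. cmod (u x - g x) \<le> e)"
    using Cc_A boundary_vanishes_on_Cc[OF cstar_subalgebra_Aplus Cc_A \<gamma>] by blast
qed

lemma boundary_vanishing_imp_Dt_o:
  assumes G: "weighted_graph b c" and cc: "canonically_compactifiable b c"
    and u: "u \<in> Dt b c" and zero: "\<forall>\<gamma>\<in>boundary (Aplus b c). \<gamma> u = 0"
  shows "u \<in> Dt_o b c v0"
proof (rule vanishing_at_infinity_imp_Dt_o[OF G u])
  have Dt_A: "Dt b c \<subseteq> Aplus b c" by (rule Dt_subset_Aplus[OF cc])
  then have Cc_A: "Cc \<subseteq> Aplus b c" using Cc_subset_Dt[OF G] by blast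
  show "finite {x. r \<le> cmod (u x)}" if "r > 0" for r
    using boundary_zero_imp_vanishing_at_infinity[OF cstar_subalgebra_Aplus one_in_Aplus Cc_A _ zero that]
      u Dt_A by blast
qed

theorem mainTheorem11:
  fixes b :: "'x \<Rightarrow> 'x \<Rightarrow> real" and c :: "'x \<Rightarrow> real" and v0 :: 'x
  assumes "countable (UNIV :: 'x set)" and "infinite (UNIV :: 'x set)"
    and "weighted_graph b c" and "graph_connected b"
    and "canonically_compactifiable b c"
  shows "Dt_o b c v0 = {u \<in> Dt b c. \<forall>\<gamma>\<in>boundary (Aplus b c). \<gamma> u = 0}"
proof (intro set_eqI iffI)
  fix u assume "u \<in> Dt_o b c v0"
  then show "u \<in> {u \<in> Dt b c. \<forall>\<gamma>\<in>boundary (Aplus b c). \<gamma> u = 0}"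
    using Dt_o_boundary_vanishing[OF assms(3-5)] unfolding Dt_o_def by blast
next
  fix u assume "u \<in> {u \<in> Dt b c. \<forall>\<gamma>\<in>boundary (Aplus b c). \<gamma> u = 0}"
  then show "u \<in> Dt_o b c v0"
    using boundary_vanishing_imp_Dt_o[OF assms(3,5)] by blast
qed

end
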